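(* Let $\sigma$ be a finite sequence of transitions such that $G_\sigma$ has no negative cycle, and let $n=|X|$. If $\sigma$ does not admit a pattern, then for every pair $(x,y)\in X\times X$ for which some complete p-tree with root labelled $(x,y)$ exists, there is a complete p-tree with root labelled $(x,y)$ of height at most $n^2$ whose weight is less than or equal to the weight of every complete p-tree with root labelled $(x,y)$.
   Context: Fix a finite set of clocks $X=\{x_0,\dots,x_m\}$ and a finite sequence $\sigma$ of timed-automaton transitions over $X$. A weight is a pair $(\preccurlyeq,d)$ with $\preccurlyeq\in\{<,\le\}$, $d\in\mathbb{Z}$; weights are added by $(\preccurlyeq_1,d_1)+(\preccurlyeq_2,d_2)=(\preccurlyeq,d_1+d_2)$, $\preccurlyeq$ being $<$ iff one of $\preccurlyeq_1,\preccurlyeq_2$ is $<$, and totally ordered by $(\preccurlyeq,d)<(\preccurlyeq',d')$ iff $d<d'$, or $d=d'$, $\preccurlyeq$ is $<$ and $\preccurlyeq'$ is $\le$. A weight is negative if it is smaller than $(\le,0)$. $G_\sigma$ is the transformation graph of $\sigma$ (a directed graph with weighted edges on vertex set $\{0,\dots,k\}\times X$ encoding time elapse, guards and resets of the transitions of $\sigma$). For a graph $G$ on $\{0,\dots,k\}\times X$ without negative cycles, its canonical form has an edge $u\to w$ for each pair of distinct vertices joined by a path, weighted by the minimal path weight, and $|G|$ is the canonical form restricted to columns $0$ and $k$, renumbered $0$ and $1$. p-trees (relative to $H=|G_\sigma|$): a p-tree is a finite rooted tree with weighted edges whose nodes are labelled by $\top$ or by pairs $(x,y)\in X\times X$; nodes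 labelled $\top$ are leaves. A node labelled $(x,y)$ has children of exactly one of the following forms: (a) a single child $\top$, with edge weight $e$, where $H$ has an edge $(c,x)\to(c,y)$ of weight $e$ for some $c\in\{0,1\}$; (b) a single child $(u,v)$, with edge weight $e_1+e_2$, where for some $c,c'\in\{0,1\}$ with $c\ne c'$, $H$ has edges $(c,x)\to(c',u)$ of weight $e_1$ and $(c',v)\to(c,y)$ of weight $e_2$; (c) two children $(x,z)$ and $(z,y)$ for some $z\in X$, both with edge weight $(\le,0)$. The weight of a p-tree is the sum of all its edge weights. A p-tree is complete if all leaves are labelled $\top$. The height of a tree is the maximal number of edges on a root-to-leaf path. An $(x,y)$-$(u,v)$ context is a p-tree with root labelled $(x,y)$ all of whose leaves are labelled $\top$ except exactly one leaf labelled $(u,v)$. A pattern is an $(x,y)$-$(x,y)$ context of negative weight; $\sigma$ admits a pattern if one exists. *)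

theory Defs
  imports Main
begin

datatype strictness = Lt | Le

type_synonym weight = "strictness \<times> int"

fun wadd :: "weight \<Rightarrow> weight \<Rightarrow> weight" where
  "wadd (s1, d1) (s2, d2) = (if s1 = Lt \<or> s2 = Lt then Lt else Le, d1 + d2)"

fun wless :: "weight \<Rightarrow> weight \<Rightarrow> bool" where
  "wless (s1, d1) (s2, d2) \<longleftrightarrow> d1 < d2 \<or> (d1 = d2 \<and> s1 = Lt \<and> s2 = Le)"

definition wle :: "weight \<Rightarrow> weight \<Rightarrow> bool" where
  "wle a b \<longleftrightarrow> a = b \<or> wless a b"

definition wzero :: weight where "wzero = (Le, 0)"

definition negative :: "weight \<Rightarrow> bool" where
  "negative e \<longleftrightarrow> wless e wzero"

type_synonym 'c vertex = "nat \<times> 'c"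
type_synonym 'c wgraph = "('c vertex \<times> 'c vertex \<times> weight) set"

inductive wpath :: "'c wgraph \<Rightarrow> 'c vertex \<Rightarrow> 'c vertex \<Rightarrow> weight \<Rightarrow> bool" for G where
  edge: "(u, w, e) \<in> G \<Longrightarrow> wpath G u w e"
| step: "wpath G u v e1 \<Longrightarrow> (v, w, e2) \<in> G \<Longrightarrow> wpath G u w (wadd e1 e2)"

definition no_neg_cycle :: "'c wgraph \<Rightarrow> bool" where
  "no_neg_cycle G \<longleftrightarrow> \<not> (\<exists>u e. wpath G u u e \<and> negative e)"

definition canon :: "'c wgraph \<Rightarrow> 'c wgraph" where
  "canon G = {(u, w, m). u \<noteq> w \<and> wpath G u w m \<and> (\<forall>e. wpath G u w e \<longrightarrow> wle m e)}"

text \<open>|G|: canonical form restricted to columns 0 and k, renumbered 0 and 1.\<close>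
definition restrict_abs :: "'c wgraph \<Rightarrow> nat \<Rightarrow> 'c wgraph" where
  "restrict_abs G k = {((c, x), (c', y), m). c \<in> {0, 1} \<and> c' \<in> {0, 1} \<and>
       ((c * k, x), (c' * k, y), m) \<in> canon G}"

text \<open>A transition: a guard (a list of constraints (x, y, (\<preccurlyeq>, d)) meaning x - y \<preccurlyeq> d,
  where the distinguished clock x0 is the constant-zero clock) and a set of reset clocks.\<close>
datatype 'c transition = Trans (guard: "('c \<times> 'c \<times> weight) list") (resets: "'c set")

text \<open>An edge u \<rightarrow> w of weight (\<preccurlyeq>,d) encodes the difference constraint p(u) - p(w) \<preccurlyeq> d,
  where p(i,x) is minus the last reset time of x after i transitions and p(i,x0) is minus
  the current time; hence the value of x after i transitions is p(i,x) - p(i,x0).\<close>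
definition pre_vertex :: "'c \<Rightarrow> nat \<Rightarrow> 'c \<Rightarrow> 'c vertex" where
  "pre_vertex x0 i x = (if x = x0 then (i, x0) else (i - 1, x))"

definition trans_edges :: "'c \<Rightarrow> nat \<Rightarrow> 'c transition \<Rightarrow> 'c wgraph" where
  "trans_edges x0 i t =
     {((i, x0), (i - 1, x0), wzero)}
   \<union> {(pre_vertex x0 i x, pre_vertex x0 i y, e) | x y e. (x, y, e) \<in> set (guard t)}
   \<union> {((i, x), (i, x0), wzero) | x. x \<noteq> x0 \<and> x \<in> resets t}
   \<union> {((i, x0), (i, x), wzero) | x. x \<noteq> x0 \<and> x \<in> resets t}
   \<union> {((i, x), (i - 1, x), wzero) | x. x \<noteq> x0 \<and> x \<notin> resets t}
   \<union> {((i - 1, x), (i, x), wzero) | x. x \<noteq> x0 \<and> x \<notin> resets t}"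

definition nonneg_edges :: "'c \<Rightarrow> nat \<Rightarrow> 'c wgraph" where
  "nonneg_edges x0 k = {((i, x0), (i, x), wzero) | i x. i \<le> k \<and> x \<noteq> x0}"

definition tgraph :: "'c \<Rightarrow> 'c transition list \<Rightarrow> 'c wgraph" where
  "tgraph x0 \<sigma> = nonneg_edges x0 (length \<sigma>) \<union>
     (\<Union>i\<in>{1..length \<sigma>}. trans_edges x0 i (\<sigma> ! (i - 1)))"

definition absG :: "'c \<Rightarrow> 'c transition list \<Rightarrow> 'c wgraph" where
  "absG x0 \<sigma> = restrict_abs (tgraph x0 \<sigma>) (length \<sigma>)"

datatype 'c label = Top | P 'c 'c

datatype 'l tree = Nd 'l "('l tree \<times> weight) list"

fun root :: "'l tree \<Rightarrow> 'l" where
  "root (Nd l cs) = l"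

fun wsum :: "weight list \<Rightarrow> weight" where
  "wsum [] = wzero"
| "wsum (e # es) = wadd e (wsum es)"

fun tweight :: "'l tree \<Rightarrow> weight" where
  "tweight (Nd l cs) = wsum (map (\<lambda>(t, e). wadd e (tweight t)) cs)"

fun height :: "'l tree \<Rightarrow> nat" where
  "height (Nd l []) = 0"
| "height (Nd l (c # cs)) = Suc (Max (set (map (\<lambda>(t, e). height t) (c # cs))))"

fun leaves :: "'l tree \<Rightarrow> 'l list" where
  "leaves (Nd l []) = [l]"
| "leaves (Nd l (c # cs)) = concat (map (\<lambda>(t, e). leaves t) (c # cs))"

inductive ptree :: "'c wgraph \<Rightarrow> 'c label tree \<Rightarrow> bool" for H where
  top: "ptree H (Nd Top [])"
| leaf: "ptree H (Nd (P x y) [])"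
| form_a: "c \<in> {0, 1} \<Longrightarrow> ((c, x), (c, y), e) \<in> H \<Longrightarrow>
      ptree H (Nd (P x y) [(Nd Top [], e)])"
| form_b: "c \<in> {0, 1} \<Longrightarrow> c' \<in> {0, 1} \<Longrightarrow> c \<noteq> c' \<Longrightarrow>
      ((c, x), (c', u), e1) \<in> H \<Longrightarrow> ((c', v), (c, y), e2) \<in> H \<Longrightarrow>
      ptree H (Nd (P u v) cs) \<Longrightarrow>
      ptree H (Nd (P x y) [(Nd (P u v) cs, wadd e1 e2)])"
| form_c: "ptree H (Nd (P x z) cs1) \<Longrightarrow> ptree H (Nd (P z y) cs2) \<Longrightarrow>
      ptree H (Nd (P x y) [(Nd (P x z) cs1, wzero), (Nd (P z y) cs2, wzero)])"

definition complete_ptree :: "'c wgraph \<Rightarrow> 'c label tree \<Rightarrow> bool" where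
  "complete_ptree H t \<longleftrightarrow> ptree H t \<and> (\<forall>l \<in> set (leaves t). l = Top)"

definition is_context :: "'c wgraph \<Rightarrow> 'c label tree \<Rightarrow> 'c \<Rightarrow> 'c \<Rightarrow> 'c \<Rightarrow> 'c \<Rightarrow> bool" where
  "is_context H t x y u v \<longleftrightarrow> ptree H t \<and> root t = P x y \<and>
     filter (\<lambda>l. l \<noteq> Top) (leaves t) = [P u v]"

definition admits_pattern :: "'c \<Rightarrow> 'c transition list \<Rightarrow> bool" where
  "admits_pattern x0 \<sigma> \<longleftrightarrow>
     (\<exists>t x y. is_context (absG x0 \<sigma>) t x y x y \<and> negative (tweight t))"

end

theory Submission
  imports Defs
begin

text \<open>If the label of a node reappears at a node \<open>s\<close> below it, the part of the tree between the
  two occurrences is an \<open>(x,y)\<close>-\<open>(x,y)\<close> context; without patterns its weight is nonnegative, so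
  replacing the node by \<open>s\<close> does not increase the weight. Doing this bottom-up turns every
  complete p-tree into one of no larger weight in which no label repeats along a branch, hence of
  height at most \<open>n\<^sup>2\<close>, the number of labels \<open>(x,y)\<close>. Since \<open>|G\<^sub>\<sigma>|\<close> is finite, there are only
  finitely many p-trees of bounded height, and one of minimal weight among them is optimal.\<close>

text \<open>Encoding \<open>(\<le>, d) \<mapsto> 2d + 1\<close> and \<open>(<, d) \<mapsto> 2d\<close> embeds the order on weights into \<open>\<int>\<close>.\<close>
definition wkey :: "weight \<Rightarrow> int" where
  "wkey e = 2 * snd e + (if fst e = Le then 1 else 0)"

lemma wle_iff_wkey: "wle a b \<longleftrightarrow> wkey a \<le> wkey b"
  by (cases a; cases b; cases "fst a"; cases "fst b") (auto simp: wle_def wkey_def)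

lemma wle_refl [simp]: "wle a a"
  by (simp add: wle_def)

lemma wle_trans: "wle a b \<Longrightarrow> wle b c \<Longrightarrow> wle a c"
  by (simp add: wle_iff_wkey)

lemma wle_antisym: "wle a b \<Longrightarrow> wle b a \<Longrightarrow> a = b"
  by (cases a; cases b) (auto simp: wle_def)

lemma wadd_mono: "wle a b \<Longrightarrow> wle c d \<Longrightarrow> wle (wadd a c) (wadd b d)"
  by (cases a; cases b; cases c; cases d;
      cases "fst a"; cases "fst b"; cases "fst c"; cases "fst d") (auto simp: wle_def)

lemma not_negative_iff: "\<not> negative e \<longleftrightarrow> wle wzero e"
  by (cases e; cases "fst e") (auto simp: negative_def wle_def wzero_def)

lemma finite_ex_wle_least:
  assumes "finite S" "S \<noteq> {}"
  shows "\<exists>t \<in> S. \<forall>t' \<in> S. wle (f t) (f t')"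
proof
  show "arg_min_on (wkey \<circ> f) S \<in> S"
    by (rule arg_min_if_finite(1)[OF assms])
  show "\<forall>t' \<in> S. wle (f (arg_min_on (wkey \<circ> f) S)) (f t')"
    using arg_min_least[OF assms, where f = "wkey \<circ> f"] by (simp add: wle_iff_wkey)
qed

interpretation wadd: comm_monoid wadd wzero
proof
  fix a b c :: weight
  show "wadd (wadd a b) c = wadd a (wadd b c)" by (cases a; cases b; cases c) auto
  show "wadd a b = wadd b a" by (cases a; cases b) auto
  show "wadd a wzero = a" by (cases a; cases "fst a") (auto simp: wzero_def)
qed

abbreviation all_leaves_Top :: "'c label tree \<Rightarrow> bool" where
  "all_leaves_Top t \<equiv> \<forall>l \<in> set (leaves t). l = Top"

inductive subtree :: "'l tree \<Rightarrow> 'l tree \<Rightarrow> bool" where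
  refl: "subtree t t"
| child: "(c, e) \<in> set cs \<Longrightarrow> subtree s c \<Longrightarrow> subtree s (Nd l cs)"

lemma set_leaves_Nd: "cs \<noteq> [] \<Longrightarrow> set (leaves (Nd l cs)) = (\<Union>(c, e) \<in> set cs. set (leaves c))"
  by (cases cs) auto

lemma leaves_child_subset: "(c, e) \<in> set cs \<Longrightarrow> set (leaves c) \<subseteq> set (leaves (Nd l cs))"
  by (subst set_leaves_Nd) auto

lemma subtree_leaves_subset: "subtree s t \<Longrightarrow> set (leaves s) \<subseteq> set (leaves t)"
  by (induction rule: subtree.induct) (auto dest!: leaves_child_subset)

lemma ptree_child: "ptree H (Nd l cs) \<Longrightarrow> (c, e) \<in> set cs \<Longrightarrow> ptree H c"
  by (erule ptree.cases) (auto intro: ptree.top)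

lemma ptree_subtree: "subtree s t \<Longrightarrow> ptree H t \<Longrightarrow> ptree H s"
  by (induction rule: subtree.induct) (auto dest: ptree_child)

lemma ptree_TopD: "ptree H (Nd Top cs) \<Longrightarrow> cs = []"
  by (erule ptree.cases) auto

lemma ptree_inner_label: "ptree H (Nd l cs) \<Longrightarrow> cs \<noteq> [] \<Longrightarrow> \<exists>a b. l = P a b"
  by (erule ptree.cases) auto

lemma ptree_replace_children:
  assumes "ptree H (Nd l cs)"
    and "list_all2 (\<lambda>(c, e) (c', e'). ptree H c' \<and> root c' = root c \<and> e' = e) cs cs'"
  shows "ptree H (Nd l cs')"
  using assms(1)
proof cases
  case top
  then show ?thesis using assms(2) by (auto intro: ptree.top)
next
  case leaf
  then show ?thesis using assms(2) by (auto intro: ptree.leaf)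
next
  case (form_a c x y e)
  then obtain t' where "cs' = [(t', e)]" "ptree H t'" "root t' = Top"
    using assms(2) by (auto simp: list_all2_Cons1)
  moreover from this have "t' = Nd Top []"
    by (cases t') (auto dest: ptree_TopD)
  ultimately show ?thesis using form_a ptree.form_a[of c x y e H] by simp
next
  case (form_b c c' x u e1 v y e2 cs1)
  then obtain t' where "cs' = [(t', wadd e1 e2)]" "ptree H t'" "root t' = P u v"
    using assms(2) by (auto simp: list_all2_Cons1)
  then show ?thesis using form_b ptree.form_b[of c c' x u e1 H v y e2] by (cases t') simp
next
  case (form_c x z cs1 y cs2)
  then obtain t1 t2 where "cs' = [(t1, wzero), (t2, wzero)]" "ptree H t1" "root t1 = P x z"
      "ptree H t2" "root t2 = P z y"
    using assms(2) by (auto simp: list_all2_Cons1)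
  then show ?thesis using form_c ptree.form_c[of H x z _ y] by (cases t1; cases t2) simp
qed

lemma tweight_update_child:
  "i < length cs \<Longrightarrow> cs ! i = (c, e) \<Longrightarrow> tweight c = wadd (tweight c') d \<Longrightarrow>
    tweight (Nd l cs) = wadd (tweight (Nd l (cs[i := (c', e)]))) d"
  by (induction cs arbitrary: i)
     (auto simp: nth_Cons wadd.assoc wadd.commute wadd.left_commute split: nat.splits)

lemma tweight_mono_children:
  "list_all2 (\<lambda>(c, e) (c', e'). wle (tweight c') (tweight c) \<and> e' = e) cs cs' \<Longrightarrow>
    wle (tweight (Nd l' cs')) (tweight (Nd l cs))"
  by (induction rule: list_all2_induct) (auto intro!: wadd_mono)

lemma nontop_leaves_update_child:
  assumes "all_leaves_Top (Nd l cs)" "i < length cs"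
  shows "filter (\<lambda>l. l \<noteq> Top) (leaves (Nd l (cs[i := (c', e)]))) = filter (\<lambda>l. l \<noteq> Top) (leaves c')"
proof -
  have "\<forall>(c, e) \<in> set cs. all_leaves_Top c"
    using assms(1) leaves_child_subset by fast
  then have "filter (\<lambda>l. l \<noteq> Top) (concat (map (\<lambda>(t, e). leaves t) (cs[i := (c', e)])))
      = filter (\<lambda>l. l \<noteq> Top) (leaves c')"
    using assms(2)
    by (induction cs arbitrary: i) (auto simp: nth_Cons filter_empty_conv split: nat.splits)
  moreover have "cs[i := (c', e)] \<noteq> []"
    using assms(2) by (cases cs) (auto split: nat.split)
  ultimately show ?thesis by (cases "cs[i := (c', e)]") simp_all
qed

lemma subtree_context:
  assumes "subtree s t" "ptree H t" "all_leaves_Top t" "root s = P a b"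
  shows "\<exists>c. ptree H c \<and> root c = root t \<and> filter (\<lambda>l. l \<noteq> Top) (leaves c) = [P a b] \<and>
    tweight t = wadd (tweight c) (tweight s)"
  using assms
proof (induction rule: subtree.induct)
  case (refl t)
  then show ?case by (intro exI[of _ "Nd (P a b) []"]) (auto intro: ptree.leaf)
next
  case (child c e cs s l)
  obtain c' where c': "ptree H c'" "root c' = root c" "filter (\<lambda>l. l \<noteq> Top) (leaves c') = [P a b]"
      "tweight c = wadd (tweight c') (tweight s)"
    using child.IH ptree_child[OF child.prems(1) child.hyps(1)]
      leaves_child_subset[OF child.hyps(1)] child.prems(2,3) by blast
  obtain i where i: "i < length cs" "cs ! i = (c, e)"
    using child.hyps(1) by (auto simp: in_set_conv_nth)
  have "\<forall>(c, e) \<in> set cs. ptree H c"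
    using ptree_child[OF child.prems(1)] by blast
  then have "list_all2 (\<lambda>(c, e) (c', e'). ptree H c' \<and> root c' = root c \<and> e' = e)
      cs (cs[i := (c', e)])"
    using i c'
    by (intro list_all2_all_nthI) (auto simp: nth_list_update dest!: nth_mem split: prod.splits)
  then have "ptree H (Nd l (cs[i := (c', e)]))"
    by (rule ptree_replace_children[OF child.prems(1)])
  moreover have "filter (\<lambda>l. l \<noteq> Top) (leaves (Nd l (cs[i := (c', e)]))) = [P a b]"
    using nontop_leaves_update_child[OF child.prems(2) i(1)] c'(3) by simp
  moreover have "tweight (Nd l cs) = wadd (tweight (Nd l (cs[i := (c', e)]))) (tweight s)"
    using tweight_update_child[OF i c'(4)] .
  ultimately show ?case by auto
qed

subsection \<open>Trees without repeated labels on a branch\<close>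

inductive repetition_free :: "'c label set \<Rightarrow> 'c label tree \<Rightarrow> bool" where
  leaf: "repetition_free A (Nd l [])"
| node: "l \<notin> A \<Longrightarrow> l \<noteq> Top \<Longrightarrow> cs \<noteq> [] \<Longrightarrow> \<forall>(c, e) \<in> set cs. repetition_free (insert l A) c \<Longrightarrow>
    repetition_free A (Nd l cs)"

lemma repetition_free_antimono: "repetition_free B t \<Longrightarrow> A \<subseteq> B \<Longrightarrow> repetition_free A t"
proof (induction arbitrary: A rule: repetition_free.induct)
  case (node l B cs)
  have "insert l A \<subseteq> insert l B" using node.prems by blast
  then have "repetition_free (insert l A) c" if "(c, e) \<in> set cs" for c e
    using bspec[OF node.IH that] by blast
  with node show ?case by (auto intro!: repetition_free.node)
qed (rule repetition_free.leaf)

lemma repetition_free_child: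
  "repetition_free A (Nd l cs) \<Longrightarrow> (c, e) \<in> set cs \<Longrightarrow> repetition_free (insert l A) c"
  by (erule repetition_free.cases) auto

lemma repetition_free_subtree: "subtree s t \<Longrightarrow> repetition_free A t \<Longrightarrow> repetition_free A s"
proof (induction arbitrary: A rule: subtree.induct)
  case (child c e cs s l)
  then show ?case by (blast dest: repetition_free_child intro: repetition_free_antimono)
qed

lemma repetition_free_insert:
  "repetition_free A t \<Longrightarrow> \<forall>s. subtree s t \<longrightarrow> root s \<noteq> m \<Longrightarrow> repetition_free (insert m A) t"
proof (induction rule: repetition_free.induct)
  case (node l A cs)
  have "l \<noteq> m" using node.prems subtree.refl by fastforce
  moreover have "repetition_free (insert l (insert m A)) c" if "(c, e) \<in> set cs" for c e
  proof -
    have "\<forall>s. subtree s c \<longrightarrow> root s \<noteq> m"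
      using node.prems that by (blast intro: subtree.child)
    then show ?thesis using bspec[OF node.IH that] by (simp add: insert_commute)
  qed
  ultimately show ?case using node.hyps by (auto intro!: repetition_free.node)
qed (rule repetition_free.leaf)

lemma height_Nd_le: "\<forall>(c, e) \<in> set cs. height c \<le> n \<Longrightarrow> height (Nd l cs) \<le> Suc n"
  by (cases cs) (auto intro!: Max.boundedI)

lemma nontop_labels_eq: "- {Top} = case_prod P ` (UNIV :: ('c \<times> 'c) set)"
proof (intro set_eqI iffI)
  fix l :: "'c label"
  assume "l \<in> - {Top}"
  then show "l \<in> case_prod P ` UNIV" by (cases l) auto
qed auto

lemma finite_label_UNIV: "finite (UNIV :: 'c::finite label set)"
proof -
  have "finite (insert Top (- {Top} :: 'c label set))"
    by (simp add: nontop_labels_eq)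
  moreover have "insert Top (- {Top}) = (UNIV :: 'c label set)" by blast
  ultimately show ?thesis by simp
qed

lemma card_nontop_labels: "card (- {Top} :: 'c::finite label set) = card (UNIV :: 'c set) ^ 2"
proof -
  have "inj (case_prod P :: 'c \<times> 'c \<Rightarrow> 'c label)"
    by (auto intro: injI)
  then show ?thesis
    by (simp add: nontop_labels_eq card_image card_cartesian_product power2_eq_square
        flip: UNIV_Times_UNIV)
qed

lemma height_repetition_free:
  "repetition_free A t \<Longrightarrow> height t \<le> card (- insert Top A :: 'c::finite label set)"
proof (induction rule: repetition_free.induct)
  case (node l A cs)
  have fin: "finite (- insert Top A)"
    using finite_label_UNIV by (rule finite_subset[rotated]) simp
  have l: "l \<in> - insert Top A" using node.hyps by simp
  have "- insert Top (insert l A) = - insert Top A - {l}" by blast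
  then have "card (- insert Top (insert l A)) = card (- insert Top A) - 1"
    using card_Diff_singleton[OF l] by simp
  moreover have "card (- insert Top A) > 0"
    using fin l by (auto simp: card_gt_0_iff)
  moreover have "\<forall>(c, e) \<in> set cs. height c \<le> card (- insert Top (insert l A))"
    using node.IH by blast
  ultimately show ?case
    using height_Nd_le[of cs "card (- insert Top A) - 1" l] by simp
qed simp

subsection \<open>Removing repetitions without increasing the weight\<close>

definition pattern_free :: "'c wgraph \<Rightarrow> bool" where
  "pattern_free H \<longleftrightarrow> (\<forall>t x y. is_context H t x y x y \<longrightarrow> \<not> negative (tweight t))"

definition improves :: "'c wgraph \<Rightarrow> 'c label tree \<Rightarrow> 'c label tree \<Rightarrow> bool" where
  "improves H t' t \<longleftrightarrow> ptree H t' \<and> all_leaves_Top t' \<and> root t' = root t \<and>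
     wle (tweight t') (tweight t) \<and> repetition_free {} t'"

lemma improve_node:
  assumes "ptree H (Nd l cs)" "all_leaves_Top (Nd l cs)" "pattern_free H"
    and "\<forall>(c, e) \<in> set cs. repetition_free {} c"
  shows "\<exists>t'. improves H t' (Nd l cs)"
proof (cases "\<exists>(c, e) \<in> set cs. \<exists>s. subtree s c \<and> root s = l")
  case True
  then obtain c e s where ce: "(c, e) \<in> set cs" "subtree s c" "root s = l" by blast
  then obtain a b where l: "l = P a b"
    using ptree_inner_label[OF assms(1)] by fastforce
  have sub: "subtree s (Nd l cs)" by (rule subtree.child[OF ce(1,2)])
  obtain cx where "is_context H cx a b a b" "tweight (Nd l cs) = wadd (tweight cx) (tweight s)"
    using subtree_context[OF sub assms(1,2)] ce(3) l by (auto simp: is_context_def)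
  moreover from this have "wle wzero (tweight cx)"
    using assms(3) not_negative_iff by (auto simp: pattern_free_def)
  ultimately have "wle (tweight s) (tweight (Nd l cs))"
    using wadd_mono[of wzero "tweight cx" "tweight s" "tweight s"] by simp
  moreover have "repetition_free {} s"
    using repetition_free_subtree[OF ce(2)] assms(4) ce(1) by blast
  ultimately show ?thesis
    using ptree_subtree[OF sub assms(1)] subtree_leaves_subset[OF sub] assms(2) ce(3)
    unfolding improves_def by (intro exI[of _ s]) auto
next
  case False
  have "repetition_free {} (Nd l cs)"
  proof (cases "cs = []")
    case False
    then obtain a b where "l = P a b"
      using ptree_inner_label[OF assms(1)] by blast
    moreover have "\<forall>(c, e) \<in> set cs. repetition_free (insert l {}) c"
      using \<open>\<not> (\<exists>(c, e) \<in> set cs. \<exists>s. subtree s c \<and> root s = l)\<close> assms(4)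
      by (blast intro: repetition_free_insert)
    ultimately show ?thesis using False by (auto intro: repetition_free.node)
  qed (auto intro: repetition_free.leaf)
  then show ?thesis using assms(1,2) unfolding improves_def by (intro exI[of _ "Nd l cs"]) simp
qed

lemma improves_trans:
  "improves H t'' t' \<Longrightarrow> root t' = root t \<Longrightarrow> wle (tweight t') (tweight t) \<Longrightarrow> improves H t'' t"
  unfolding improves_def by (metis wle_trans)

lemma improve_ptree:
  "ptree H t \<Longrightarrow> all_leaves_Top t \<Longrightarrow> pattern_free H \<Longrightarrow> \<exists>t'. improves H t' t"
proof (induction t)
  case (Nd l cs)
  have children: "\<exists>c'. improves H c' c" if "(c, e) \<in> set cs" for c e
    using Nd.IH[of "(c, e)" c] Nd.prems ptree_child[OF Nd.prems(1) that]
      leaves_child_subset[OF that] that by auto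
  define cs' where "cs' = map (\<lambda>(c, e). (SOME c'. improves H c' c, e)) cs"
  have some_improves: "\<forall>(c, e) \<in> set cs. improves H (SOME c'. improves H c' c) c"
    using children by (auto intro: someI_ex)
  then have improved: "list_all2 (\<lambda>(c, e) (c', e'). improves H c' c \<and> e' = e) cs cs'"
    unfolding cs'_def list.rel_map(2) list_all2_same by auto
  have "ptree H (Nd l cs')"
    by (rule ptree_replace_children[OF Nd.prems(1) list_all2_mono[OF improved]])
      (auto simp: improves_def)
  moreover have weight_le: "wle (tweight (Nd l cs')) (tweight (Nd l cs))"
    by (rule tweight_mono_children[OF list_all2_mono[OF improved]]) (auto simp: improves_def)
  moreover have "\<forall>(c', e') \<in> set cs'. all_leaves_Top c' \<and> repetition_free {} c'"
    using some_improves by (auto simp: cs'_def improves_def)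
  moreover from this have "all_leaves_Top (Nd l cs')"
    using Nd.prems(2) by (cases "cs = []") (auto simp: cs'_def set_leaves_Nd)
  ultimately obtain t' where "improves H t' (Nd l cs')"
    using improve_node Nd.prems(3) by blast
  then have "improves H t' (Nd l cs)"
    by (rule improves_trans[OF _ _ weight_le]) simp
  then show ?case ..
qed

lemma improve_complete_ptree:
  fixes H :: "'c::finite wgraph"
  assumes "pattern_free H" "complete_ptree H t'"
  shows "\<exists>t. complete_ptree H t \<and> root t = root t' \<and> height t \<le> card (UNIV :: 'c set) ^ 2 \<and>
    wle (tweight t) (tweight t')"
proof -
  obtain t where t: "improves H t t'"
    using improve_ptree[of H t'] assms by (auto simp: complete_ptree_def)
  then have "height t \<le> card (UNIV :: 'c set) ^ 2"
    using height_repetition_free[of "{}" t] card_nontop_labels[where 'c='c]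
    by (simp add: improves_def)
  with t show ?thesis
    by (auto simp: improves_def complete_ptree_def)
qed

lemma canon_functional: "(u, w, m1) \<in> canon G \<Longrightarrow> (u, w, m2) \<in> canon G \<Longrightarrow> m1 = m2"
  unfolding canon_def using wle_antisym by blast

lemma finite_restrict_abs: "finite (restrict_abs G k :: ('c::finite) wgraph)"
proof (rule inj_on_finite)
  show "inj_on (\<lambda>(u, w, m). (u, w)) (restrict_abs G k)"
    by (rule inj_onI) (auto simp: restrict_abs_def dest: canon_functional)
  show "(\<lambda>(u, w, m). (u, w)) ` restrict_abs G k \<subseteq> ({0, 1} \<times> UNIV) \<times> ({0, 1} \<times> UNIV)"
    by (auto simp: restrict_abs_def)
qed simp

definition child_weights :: "'c wgraph \<Rightarrow> weight set" where
  "child_weights H =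
     insert wzero (snd ` snd ` H \<union> case_prod wadd ` (snd ` snd ` H \<times> snd ` snd ` H))"

lemma finite_child_weights: "finite H \<Longrightarrow> finite (child_weights H)"
  by (simp add: child_weights_def)

lemma ptree_child_weight: "ptree H (Nd l cs) \<Longrightarrow> (c, e) \<in> set cs \<Longrightarrow> e \<in> child_weights H"
proof (erule ptree.cases)
  fix c' x y e'
  assume "((c', x), (c', y), e') \<in> H" "Nd l cs = Nd (P x y) [(Nd Top [], e')]" "(c, e) \<in> set cs"
  then show ?thesis by (auto simp: child_weights_def intro: rev_image_eqI)
next
  fix c1 c2 x u e1 v y e2 cs'
  assume "((c1, x), (c2, u), e1) \<in> H" "((c2, v), (c1, y), e2) \<in> H"
    and "Nd l cs = Nd (P x y) [(Nd (P u v) cs', wadd e1 e2)]" "(c, e) \<in> set cs"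
  then show ?thesis
    by (auto simp: child_weights_def intro!: rev_image_eqI[of "(e1, e2)"] intro: rev_image_eqI)
qed (auto simp: child_weights_def)

lemma ptree_length_children: "ptree H (Nd l cs) \<Longrightarrow> length cs \<le> 2"
  by (erule ptree.cases) auto

lemma height_child: "(c, e) \<in> set cs \<Longrightarrow> height c < height (Nd l cs)"
  by (cases cs) (auto simp: less_Suc_eq_le intro!: Max_ge)

lemma finite_ptrees_height_le:
  assumes "finite H"
  shows "finite {t :: 'c::finite label tree. ptree H t \<and> height t \<le> h}"
proof (induction h)
  case 0
  have "{t :: 'c label tree. ptree H t \<and> height t \<le> 0} \<subseteq> range (\<lambda>l. Nd l [])"
    by (auto elim: height.elims)
  then show ?case
    by (rule finite_subset) (simp add: finite_label_UNIV)
next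
  case (Suc h)
  let ?T = "{t :: 'c label tree. ptree H t \<and> height t \<le> h}"
  let ?Cs = "{cs. set cs \<subseteq> ?T \<times> child_weights H \<and> length cs \<le> 2}"
  have "{t. ptree H t \<and> height t \<le> Suc h} \<subseteq> case_prod Nd ` (UNIV \<times> ?Cs)"
  proof
    fix t :: "'c label tree"
    assume t: "t \<in> {t. ptree H t \<and> height t \<le> Suc h}"
    obtain l cs where t_eq: "t = Nd l cs" by (cases t)
    have "set cs \<subseteq> ?T \<times> child_weights H"
    proof safe
      fix c e
      assume ce: "(c, e) \<in> set cs"
      show "ptree H c" using ptree_child[OF _ ce] t t_eq by blast
      show "height c \<le> h" using height_child[OF ce, of l] t t_eq by simp
      show "e \<in> child_weights H" using ptree_child_weight[OF _ ce] t t_eq by blast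
    qed
    moreover have "length cs \<le> 2"
      using ptree_length_children t t_eq by blast
    ultimately show "t \<in> case_prod Nd ` (UNIV \<times> ?Cs)"
      using t_eq by blast
  qed
  moreover have "finite ((UNIV :: 'c label set) \<times> ?Cs)"
    using Suc finite_label_UNIV finite_child_weights[OF assms]
    by (intro finite_SigmaI finite_lists_length_le) auto
  ultimately show ?case by (rule finite_subset[OF _ finite_imageI])
qed

theorem mainTheorem17:
  fixes x0 :: "'c::finite" and \<sigma> :: "'c transition list" and x y :: 'c
  assumes "no_neg_cycle (tgraph x0 \<sigma>)"
    and "\<not> admits_pattern x0 \<sigma>"
    and "\<exists>t. complete_ptree (absG x0 \<sigma>) t \<and> root t = P x y"
  shows "\<exists>t. complete_ptree (absG x0 \<sigma>) t \<and> root t = P x y \<and>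
           height t \<le> card (UNIV :: 'c set) ^ 2 \<and>
           (\<forall>t'. complete_ptree (absG x0 \<sigma>) t' \<and> root t' = P x y \<longrightarrow> wle (tweight t) (tweight t'))"
proof -
  let ?H = "absG x0 \<sigma>"
  let ?S = "{t. complete_ptree ?H t \<and> root t = P x y \<and> height t \<le> card (UNIV :: 'c set) ^ 2}"
  have improve: "\<exists>t \<in> ?S. wle (tweight t) (tweight t')"
    if "complete_ptree ?H t'" "root t' = P x y" for t'
    using improve_complete_ptree[of ?H t'] assms(2) that
    by (auto simp: pattern_free_def admits_pattern_def)
  have "finite ?S"
    using finite_ptrees_height_le[OF finite_restrict_abs[of "tgraph x0 \<sigma>" "length \<sigma>"]]
    by (rule finite_subset[rotated]) (auto simp: complete_ptree_def absG_def)
  moreover have "?S \<noteq> {}"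
    using assms(3) improve by blast
  ultimately obtain t where "t \<in> ?S" "\<forall>t' \<in> ?S. wle (tweight t) (tweight t')"
    using finite_ex_wle_least by blast
  then show ?thesis
    using improve wle_trans by blast
qed

end
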